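(* Let $d\ge 1$, let $\Lambda$ be a $(d-2)$-dimensional simplicial complex with vertex set $[n]$, and let $\Gamma=0*\Lambda$ be the cone over $\Lambda$ with a new apex vertex $0$. Let $p':[n]\to\mathbb{R}^{d-1}$ be such that the coordinates $\{p'(s)_t:s\in[n],t\in[d-1]\}$ are algebraically independent over $\mathbb{Q}$, and set $\mathbb{F}'=\mathbb{Q}(p'(s)_t:s\in[n],t\in[d-1])$. Let $a_1,\dots,a_n\in\mathbb{R}$ be algebraically independent over $\mathbb{F}'$, and let $\mathbb{F}\subseteq\mathbb{R}$ be any field containing $\mathbb{F}'(a_1,\dots,a_n)$. Define $p:\{0,1,\dots,n\}\to\mathbb{F}^d$ by $p(0)=(0,\dots,0,-1)$ and $p(s)=((1+a_s)p'(s),a_s)$ for $s\in[n]$. Then for all $0\le i\le d-1$ there exists an $\mathbb{F}'$-linear map $\psi_i:\mathcal{S}^\ell_i(\Lambda,p';\mathbb{F}')\to\mathcal{S}^\ell_i(\Gamma,p;\mathbb{F})$ such that: (1) for every $\omega'\in\mathcal{S}^\ell_i(\Lambda,p';\mathbb{F}')$, $\mathrm{supp}(\psi_i(\omega'))=\mathrm{skel}_{i-1}(0*\mathrm{supp}(\omega'))$; and (2) with $c'=\sum_{j=1}^n x_j$ and $c=\sum_{j=0}^n x_j$, $\psi_{i-1}(\partial_{c'}\omega')=\partial_c(\psi_i(\omega'))$ for all $\omega'\in\mathcal{S}^\ell_i(\Lambda,p';\mathbb{F}')$ (for $1\le i\le d-1$).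
   Context: Simplicial complexes are nonempty families of subsets of a finite vertex set closed under subsets and containing all singletons; an $i$-face has $i+1$ elements. The cone $0*\Lambda=\{\sigma,\sigma\cup\{0\}:\sigma\in\Lambda\}$. $\mathrm{skel}_m(K)$ is the subcomplex of faces of dimension $\le m$. For a complex $K$ with vertex set $W$, a field $\mathbb{K}\subseteq\mathbb{R}$ and a map $r:W\to\mathbb{K}^e$ where $e-1=\dim K$, set $\theta_t=\sum_{v\in W}r(v)_tx_v\in\mathbb{K}[x_v:v\in W]$ for $t\in[e]$, and for a linear form $\ell=\sum_v\ell_vx_v$ let $\partial_\ell=\sum_v\ell_v\,\partial/\partial x_v$. A linear $i$-stress on $(K,r;\mathbb{K})$ is a homogeneous degree-$i$ polynomial $\lambda\in\mathbb{K}[x_v]$ such that every monomial with nonzero coefficient has support (set of variables dividing it) a face of $K$, and $\partial_{\theta_t}\lambda=0$ for all $t\in[e]$; these form the $\mathbb{K}$-vector space $\mathcal{S}^\ell_i(K,r;\mathbb{K})$. For a stress $\lambda$ of degree $i$ and an $(i-1)$-face $\sigma$, $\lambda_\sigma$ is the coefficient of $\prod_{v\in\sigma}x_v$, and $\mathrm{supp}(\lambda)$ is the subcomplex generated by all $(i-1)$-faces $\sigma$ with $\lambda_\sigma\neq0$. *)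

theory Defs
  imports Complex_Main
begin

definition simplicial_complex :: "nat set \<Rightarrow> nat set set \<Rightarrow> bool" where
  "simplicial_complex V K \<longleftrightarrow> finite V \<and> K \<noteq> {} \<and> K \<subseteq> Pow V \<and>
     (\<forall>\<sigma>\<in>K. \<forall>\<tau>. \<tau> \<subseteq> \<sigma> \<longrightarrow> \<tau> \<in> K) \<and> (\<forall>v\<in>V. {v} \<in> K)"

text \<open>dim K + 1 (maximal number of vertices of a face).\<close>
definition cdim1 :: "nat set set \<Rightarrow> nat" where
  "cdim1 K = Max (card ` K)"

definition cone0 :: "nat set set \<Rightarrow> nat set set" where
  "cone0 L = L \<union> {insert 0 \<sigma> | \<sigma>. \<sigma> \<in> L}"

definition skel :: "int \<Rightarrow> nat set set \<Rightarrow> nat set set" where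
  "skel m K = {\<sigma>\<in>K. int (card \<sigma>) \<le> m + 1}"

definition is_subfield :: "real set \<Rightarrow> bool" where
  "is_subfield F \<longleftrightarrow> 0 \<in> F \<and> 1 \<in> F \<and> (\<forall>x\<in>F. \<forall>y\<in>F. x + y \<in> F \<and> x * y \<in> F) \<and>
     (\<forall>x\<in>F. - x \<in> F \<and> inverse x \<in> F)"

definition field_gen :: "real set \<Rightarrow> real set" where
  "field_gen S = \<Inter>{F. is_subfield F \<and> S \<subseteq> F}"

definition alg_indep :: "real set \<Rightarrow> 'i set \<Rightarrow> ('i \<Rightarrow> real) \<Rightarrow> bool" where
  "alg_indep K I x \<longleftrightarrow>
     (\<forall>c :: ('i \<Rightarrow> nat) \<Rightarrow> real.
        finite {m. c m \<noteq> 0} \<and> (\<forall>m. c m \<noteq> 0 \<longrightarrow> c m \<in> K \<and> (\<forall>j. j \<notin> I \<longrightarrow> m j = 0)) \<and>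
        (\<Sum>m\<in>{m. c m \<noteq> 0}. c m * (\<Prod>j\<in>I. x j ^ m j)) = 0
        \<longrightarrow> (\<forall>m. c m = 0))"

text \<open>Polynomials in variables x_v (v :: nat) are represented by their coefficient
  functions on monomials (exponent vectors nat \<Rightarrow> nat).\<close>
type_synonym poly_r = "(nat \<Rightarrow> nat) \<Rightarrow> real"

definition mon_supp :: "(nat \<Rightarrow> nat) \<Rightarrow> nat set" where
  "mon_supp m = {v. m v \<noteq> 0}"

definition mon_deg :: "(nat \<Rightarrow> nat) \<Rightarrow> nat" where
  "mon_deg m = (\<Sum>v\<in>mon_supp m. m v)"

text \<open>Derivation along the linear form sum_{v in W} l v * x_v.\<close>
definition pderiv_lin :: "nat set \<Rightarrow> (nat \<Rightarrow> real) \<Rightarrow> poly_r \<Rightarrow> poly_r" where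
  "pderiv_lin W l f = (\<lambda>m. \<Sum>v\<in>W. l v * real (Suc (m v)) * f (m(v := Suc (m v))))"

text \<open>Linear i-stresses on (K, r; Fld): r v t is the t-th coordinate (t in 1..e) of r(v),
  where e - 1 = dim K and the vertex set of K is the union of its faces.\<close>
definition lin_stresses :: "nat set set \<Rightarrow> (nat \<Rightarrow> nat \<Rightarrow> real) \<Rightarrow> real set \<Rightarrow> nat \<Rightarrow> poly_r set" where
  "lin_stresses K r Fld i = {f.
     (\<forall>m. f m \<in> Fld) \<and>
     (\<forall>m. f m \<noteq> 0 \<longrightarrow> mon_supp m \<in> K \<and> mon_deg m = i) \<and>
     (\<forall>t\<in>{1..cdim1 K}. pderiv_lin (\<Union>K) (\<lambda>v. r v t) f = (\<lambda>_. 0))}"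

definition sqfree :: "nat set \<Rightarrow> nat \<Rightarrow> nat" where
  "sqfree \<sigma> = (\<lambda>v. if v \<in> \<sigma> then 1 else 0)"

definition stress_supp :: "nat \<Rightarrow> poly_r \<Rightarrow> nat set set" where
  "stress_supp i f = {\<tau>. \<exists>\<sigma>. finite \<sigma> \<and> card \<sigma> = i \<and> f (sqfree \<sigma>) \<noteq> 0 \<and> \<tau> \<subseteq> \<sigma>}"

end

theory Submission
  imports Defs "Jordan_Normal_Form.Determinant"
begin

(* The lift is psi(omega) = exp(x_0 D_a) omega(x_1/(1 + a_1), ..., x_n/(1 + a_n)), where D_a is the
   derivation along sum_s a_s x_s.  The rescaling turns derivations along the first d - 1
   coordinates of p into derivations along the coordinates of p', and exp(x_0 D_a) turns d/dx_0 into
   D_a; hence the derivation along the last coordinate -x_0 + sum_s a_s x_s annihilates psi(omega),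
   and the derivation along c = sum_{j>=0} x_j becomes the one along c' = sum_{j>=1} x_j.

   On squarefree monomials, psi(omega) keeps the coefficients of omega away from the apex, while the
   coefficient of x_0 x_rho is, up to a nonzero factor, sum_s (1 + m_s) omega(x_rho x_s) a_s/(1 + a_s).
   Genericity of p' lets every nonzero coefficient of a stress be dominated by a nonzero squarefree
   one, and algebraic independence of the a_s over F' makes the a_s/(1 + a_s) linearly independent
   over F'.  So x_0 x_rho survives exactly when omega is nonzero on some face rho + {s}, which is
   the support formula. *)

section \<open>Algebraic independence\<close>

lemma is_subfield_sum: "is_subfield K \<Longrightarrow> (\<And>x. x \<in> A \<Longrightarrow> f x \<in> K) \<Longrightarrow> sum f A \<in> K"
  by (induction A rule: infinite_finite_induct) (auto simp: is_subfield_def)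

lemma is_subfield_prod: "is_subfield K \<Longrightarrow> (\<And>x. x \<in> A \<Longrightarrow> f x \<in> K) \<Longrightarrow> prod f A \<in> K"
  by (induction A rule: infinite_finite_induct) (auto simp: is_subfield_def)

lemma is_subfield_power: "is_subfield K \<Longrightarrow> x \<in> K \<Longrightarrow> x ^ k \<in> K"
  by (induction k) (auto simp: is_subfield_def)

lemma is_subfield_of_nat: "is_subfield K \<Longrightarrow> real k \<in> K"
  by (induction k) (auto simp: is_subfield_def)

lemma is_subfield_field_gen: "is_subfield (field_gen S)"
  unfolding field_gen_def is_subfield_def by auto

lemma field_gen_superset: "S \<subseteq> field_gen S"
  unfolding field_gen_def by auto

lemma alg_indep_sum_monomials_eq_0D:
  assumes indep: "alg_indep K I x" and "finite P" and inj: "inj_on M P"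
    and coeffs: "\<And>\<pi>. \<pi> \<in> P \<Longrightarrow> \<kappa> \<pi> \<in> K"
    and vars: "\<And>\<pi> j. \<pi> \<in> P \<Longrightarrow> j \<notin> I \<Longrightarrow> M \<pi> j = 0"
    and vanish: "(\<Sum>\<pi>\<in>P. \<kappa> \<pi> * (\<Prod>j\<in>I. x j ^ M \<pi> j)) = 0"
    and "\<pi> \<in> P"
  shows "\<kappa> \<pi> = 0"
proof -
  define c where "c m = (if m \<in> M ` P then \<kappa> (the_inv_into P M m) else 0)" for m
  have c_M: "c (M \<pi>) = \<kappa> \<pi>" if "\<pi> \<in> P" for \<pi>
    using that inj by (simp add: c_def the_inv_into_f_f)
  let ?P = "{\<pi>\<in>P. \<kappa> \<pi> \<noteq> 0}"
  have supp: "{m. c m \<noteq> 0} = M ` ?P"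
  proof
    show "{m. c m \<noteq> 0} \<subseteq> M ` ?P"
      by (auto simp: c_def the_inv_into_f_f[OF inj] split: if_splits)
    show "M ` ?P \<subseteq> {m. c m \<noteq> 0}"
      using c_M by auto
  qed
  then have c_supp: "m \<in> M ` P" if "c m \<noteq> 0" for m
    using that by blast
  have "(\<Sum>m\<in>{m. c m \<noteq> 0}. c m * (\<Prod>j\<in>I. x j ^ m j)) = (\<Sum>\<pi>\<in>?P. \<kappa> \<pi> * (\<Prod>j\<in>I. x j ^ M \<pi> j))"
    by (simp only: supp, subst sum.reindex) (auto intro: inj_on_subset[OF inj] simp: c_M)
  also have "\<dots> = 0"
    using vanish by (subst sum.mono_neutral_left[OF \<open>finite P\<close>]) auto
  finally have "c (M \<pi>) = 0"
    using \<open>finite P\<close>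
    by (intro indep[unfolded alg_indep_def, rule_format, of c])
      (auto simp: supp c_M coeffs vars dest!: c_supp)
  then show ?thesis
    using c_M[OF \<open>\<pi> \<in> P\<close>] by simp
qed

lemma alg_indep_sum_sqfree_monomials_eq_0D:
  assumes indep: "alg_indep K I x" and "finite I" and "finite P" and inj: "inj_on G P"
    and vars: "\<And>\<pi>. \<pi> \<in> P \<Longrightarrow> G \<pi> \<subseteq> I" and coeffs: "\<And>\<pi>. \<pi> \<in> P \<Longrightarrow> \<kappa> \<pi> \<in> K"
    and vanish: "(\<Sum>\<pi>\<in>P. \<kappa> \<pi> * (\<Prod>j\<in>G \<pi>. x j)) = 0"
    and "\<pi> \<in> P"
  shows "\<kappa> \<pi> = 0"
proof -
  define M where "M \<pi> = (\<lambda>j. of_bool (j \<in> G \<pi>) :: nat)" for \<pi>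
  have monomial: "(\<Prod>j\<in>I. x j ^ M \<pi> j) = (\<Prod>j\<in>G \<pi>. x j)" if "\<pi> \<in> P" for \<pi>
  proof -
    have "(\<Prod>j\<in>I. x j ^ M \<pi> j) = (\<Prod>j\<in>I. if j \<in> G \<pi> then x j else 1)"
      by (rule prod.cong) (auto simp: M_def)
    then show ?thesis
      using vars[OF that] \<open>finite I\<close> by (simp add: prod.inter_restrict[symmetric] Int_absorb1)
  qed
  have "inj_on M P"
    using inj by (auto simp: inj_on_def M_def fun_eq_iff set_eq_iff of_bool_eq_iff)
  moreover have "(\<Sum>\<pi>\<in>P. \<kappa> \<pi> * (\<Prod>j\<in>I. x j ^ M \<pi> j)) = 0"
    using vanish monomial by simp
  ultimately show ?thesis
    using vars \<open>finite P\<close> \<open>\<pi> \<in> P\<close> coeffs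
    by (intro alg_indep_sum_monomials_eq_0D[OF indep, where M = M]) (auto simp: M_def)
qed

lemma alg_indep_one_plus_nonzero:
  assumes indep: "alg_indep K I x" and K: "is_subfield K" and "finite I" "s \<in> I"
  shows "1 + x s \<noteq> 0"
proof
  assume "1 + x s = 0"
  then have "(\<Sum>B\<in>{{}, {s}}. 1 * (\<Prod>j\<in>id B. x j)) = 0"
    by simp
  then have "(1::real) = 0"
    using assms(3,4) K
    by (intro alg_indep_sum_sqfree_monomials_eq_0D[OF indep, of "{{}, {s}}" id "\<lambda>_. 1"])
      (auto simp: is_subfield_def)
  then show False by simp
qed

lemma sum_times_prod_one_plus_expand:
  fixes c a :: "'i \<Rightarrow> 'a::comm_ring_1"
  assumes "finite N"
  shows "(\<Sum>s\<in>N. c s * a s * (\<Prod>r\<in>N - {s}. 1 + a r)) = (\<Sum>B\<in>Pow N. (\<Sum>s\<in>B. c s) * (\<Prod>r\<in>B. a r))"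
proof -
  have expand_one: "a s * (\<Prod>r\<in>N - {s}. 1 + a r) = (\<Sum>B\<in>{B\<in>Pow N. s \<in> B}. \<Prod>r\<in>B. a r)"
    if "s \<in> N" for s
  proof -
    have "a s * (\<Prod>r\<in>N - {s}. 1 + a r) = (\<Sum>B\<in>Pow (N - {s}). a s * (\<Prod>r\<in>B. a r))"
      using assms prod_add[of "N - {s}" a "\<lambda>_. 1"] by (simp add: sum_distrib_left add.commute)
    also have "\<dots> = (\<Sum>B\<in>Pow (N - {s}). \<Prod>r\<in>insert s B. a r)"
    proof (intro sum.cong refl)
      fix B assume "B \<in> Pow (N - {s})"
      then have "finite B" "s \<notin> B"
        using assms by (auto intro: rev_finite_subset)
      then show "a s * (\<Prod>r\<in>B. a r) = (\<Prod>r\<in>insert s B. a r)" by simp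
    qed
    also have "\<dots> = (\<Sum>B\<in>{B\<in>Pow N. s \<in> B}. \<Prod>r\<in>B. a r)"
    proof (rule sum.reindex_bij_betw)
      show "bij_betw (insert s) (Pow (N - {s})) {B\<in>Pow N. s \<in> B}"
        using that by (intro bij_betw_byWitness[where f' = "\<lambda>B. B - {s}"]) auto
    qed
    finally show ?thesis .
  qed
  have "(\<Sum>s\<in>N. c s * a s * (\<Prod>r\<in>N - {s}. 1 + a r)) = (\<Sum>s\<in>N. \<Sum>B\<in>{B\<in>Pow N. s \<in> B}. c s * (\<Prod>r\<in>B. a r))"
    by (intro sum.cong refl) (simp add: expand_one mult.assoc sum_distrib_left)
  also have "\<dots> = (\<Sum>B\<in>Pow N. \<Sum>s\<in>{s\<in>N. s \<in> B}. c s * (\<Prod>r\<in>B. a r))"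
    using assms by (intro sum.swap_restrict) auto
  also have "\<dots> = (\<Sum>B\<in>Pow N. (\<Sum>s\<in>B. c s) * (\<Prod>r\<in>B. a r))"
    by (intro sum.cong refl) (auto simp: sum_distrib_right Int_absorb1 intro!: sum.cong)
  finally show ?thesis .
qed

text \<open>Clearing denominators turns the relation into a polynomial one in which the coefficient
  of the monomial \<open>a\<^sub>s\<close> is \<open>c\<^sub>s\<close>.\<close>
lemma alg_indep_fractions_eq_0D:
  fixes a :: "'i \<Rightarrow> real"
  assumes indep: "alg_indep K N a" and K: "is_subfield K" and fin: "finite N"
    and coeffs: "\<And>s. s \<in> N \<Longrightarrow> c s \<in> K"
    and vanish: "(\<Sum>s\<in>N. c s * (a s / (1 + a s))) = 0" and "s \<in> N"
  shows "c s = 0"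
proof -
  have "(\<Sum>s\<in>N. c s * a s * (\<Prod>r\<in>N - {s}. 1 + a r)) = (\<Sum>s\<in>N. c s * (a s / (1 + a s))) * (\<Prod>r\<in>N. 1 + a r)"
    unfolding sum_distrib_right
  proof (intro sum.cong refl)
    fix s assume "s \<in> N"
    then have "(\<Prod>r\<in>N. 1 + a r) = (1 + a s) * (\<Prod>r\<in>N - {s}. 1 + a r)"
      by (rule prod.remove[OF fin])
    then show "c s * a s * (\<Prod>r\<in>N - {s}. 1 + a r) = c s * (a s / (1 + a s)) * (\<Prod>r\<in>N. 1 + a r)"
      using alg_indep_one_plus_nonzero[OF indep K fin \<open>s \<in> N\<close>] by simp
  qed
  then have expansion: "(\<Sum>B\<in>Pow N. (\<Sum>s\<in>B. c s) * (\<Prod>r\<in>id B. a r)) = 0"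
    using vanish by (simp add: sum_times_prod_one_plus_expand[OF fin])
  have "(\<Sum>s\<in>{s}. c s) = 0"
  proof (rule alg_indep_sum_sqfree_monomials_eq_0D[OF indep fin _ inj_on_id _ _ expansion])
    show "(\<Sum>s\<in>B. c s) \<in> K" if "B \<in> Pow N" for B
      using that coeffs by (intro is_subfield_sum[OF K]) auto
  qed (use fin \<open>s \<in> N\<close> in auto)
  then show ?thesis by simp
qed

lemma inj_on_permutation_graphs:
  fixes e :: "nat \<times> nat \<Rightarrow> 'i"
  assumes "inj_on e ({0..<k} \<times> {0..<k})"
  shows "inj_on (\<lambda>\<pi>. (\<lambda>i. e (i, \<pi> i)) ` {0..<k}) {\<pi>. \<pi> permutes {0..<k}}"
proof (rule inj_onI)
  fix \<pi> \<pi>'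
  assume \<pi>: "\<pi> \<in> {\<pi>. \<pi> permutes {0..<k}}" and \<pi>': "\<pi>' \<in> {\<pi>. \<pi> permutes {0..<k}}"
    and graphs: "(\<lambda>i. e (i, \<pi> i)) ` {0..<k} = (\<lambda>i. e (i, \<pi>' i)) ` {0..<k}"
  have "\<pi> i = \<pi>' i" for i
  proof (cases "i < k")
    case True
    have "e (i, \<pi> i) \<in> (\<lambda>i. e (i, \<pi>' i)) ` {0..<k}"
      unfolding graphs[symmetric] using True by (intro image_eqI[where x = i]) simp_all
    then obtain i' where "i' < k" "e (i, \<pi> i) = e (i', \<pi>' i')"
      by auto
    moreover have "\<pi> i < k" "\<pi>' i' < k"
      using True \<open>i' < k\<close> \<pi> \<pi>' by (simp_all add: permutes_in_image)
    ultimately show ?thesis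
      using True inj_onD[OF assms] by fastforce
  next
    case False
    then show ?thesis
      using \<pi> \<pi>' by (simp add: permutes_not_in)
  qed
  then show "\<pi> = \<pi>'" by blast
qed

text \<open>The determinant is a polynomial with integer coefficients in the entries, and the
  identity permutation contributes a monomial with coefficient \<open>1\<close>.\<close>
lemma det_alg_indep_entries_nonzero:
  fixes x :: "'i \<Rightarrow> real" and e :: "nat \<times> nat \<Rightarrow> 'i"
  assumes indep: "alg_indep \<rat> I x" and "finite I"
    and inj_e: "inj_on e ({0..<k} \<times> {0..<k})" and e_I: "e ` ({0..<k} \<times> {0..<k}) \<subseteq> I"
  shows "det (mat k k (\<lambda>ij. x (e ij))) \<noteq> 0"
proof
  assume det0: "det (mat k k (\<lambda>ij. x (e ij))) = 0"
  let ?P = "{\<pi>. \<pi> permutes {0..<k}}"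
  define G where "G \<pi> = (\<lambda>i. e (i, \<pi> i)) ` {0..<k}" for \<pi> :: "nat \<Rightarrow> nat"
  have in_range: "\<pi> i \<in> {0..<k}" if "\<pi> \<in> ?P" "i \<in> {0..<k}" for \<pi> i
    using that by (simp add: permutes_in_image)
  have "(\<Prod>i = 0..<k. x (e (i, \<pi> i))) = (\<Prod>j\<in>G \<pi>. x j)" if "\<pi> \<in> ?P" for \<pi>
    unfolding G_def using in_range[OF that]
    by (subst prod.reindex) (auto intro!: inj_onI dest: inj_onD[OF inj_e])
  then have "det (mat k k (\<lambda>ij. x (e ij))) = (\<Sum>\<pi>\<in>?P. of_int (sign \<pi>) * (\<Prod>j\<in>G \<pi>. x j))"
    using in_range by (auto simp: det_def'[of _ k] intro!: sum.cong prod.cong)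
  with det0 have expansion: "(\<Sum>\<pi>\<in>?P. of_int (sign \<pi>) * (\<Prod>j\<in>G \<pi>. x j)) = 0"
    by simp
  have "of_int (sign (id :: nat \<Rightarrow> nat)) = (0::real)"
  proof (rule alg_indep_sum_sqfree_monomials_eq_0D[OF indep \<open>finite I\<close> _ _ _ _ expansion])
    show "finite ?P"
      by (simp add: finite_permutations)
    show "inj_on G ?P"
      unfolding G_def by (rule inj_on_permutation_graphs[OF inj_e])
    show "G \<pi> \<subseteq> I" if "\<pi> \<in> ?P" for \<pi>
      using e_I in_range[OF that] by (auto simp: G_def)
  qed (simp_all add: permutes_id)
  then show False
    by (simp add: sign_id)
qed

definition lin_indep_on_faces :: "nat set set \<Rightarrow> nat \<Rightarrow> (nat \<Rightarrow> nat \<Rightarrow> real) \<Rightarrow> bool" where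
  "lin_indep_on_faces K e r \<longleftrightarrow>
     (\<forall>\<sigma>\<in>K. \<forall>c. (\<forall>t\<in>{1..e}. (\<Sum>u\<in>\<sigma>. c u * r u t) = 0) \<longrightarrow> (\<forall>u\<in>\<sigma>. c u = 0))"

lemma det_coordinate_matrix_nonzero:
  assumes indep: "alg_indep \<rat> (S \<times> {1..e}) (\<lambda>(s, t). r s t)" and "finite S"
    and h: "inj_on h {0..<k}" "h ` {0..<k} \<subseteq> S" and "k \<le> e"
  shows "det (mat k k (\<lambda>(i, j). r (h j) (Suc i))) \<noteq> 0"
proof -
  let ?pos = "\<lambda>(i, j). (h j, Suc i)"
  have "det (mat k k (\<lambda>ij. (\<lambda>(s, t). r s t) (?pos ij))) \<noteq> 0"
  proof (rule det_alg_indep_entries_nonzero[OF indep])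
    show "inj_on ?pos ({0..<k} \<times> {0..<k})"
      using h(1) by (auto simp: inj_on_def)
    show "?pos ` ({0..<k} \<times> {0..<k}) \<subseteq> S \<times> {1..e}"
      using h(2) \<open>k \<le> e\<close> by auto
  qed (use \<open>finite S\<close> in simp)
  then show ?thesis
    by (simp add: case_prod_unfold)
qed

lemma alg_indep_imp_lin_indep:
  assumes indep: "alg_indep \<rat> (S \<times> {1..e}) (\<lambda>(s, t). r s t)" and "finite S"
    and "\<sigma> \<subseteq> S" "card \<sigma> \<le> e"
    and vanish: "\<forall>t\<in>{1..e}. (\<Sum>u\<in>\<sigma>. c u * r u t) = 0" and "u \<in> \<sigma>"
  shows "c u = 0"
proof -
  have "finite \<sigma>"
    using \<open>finite S\<close> \<open>\<sigma> \<subseteq> S\<close> finite_subset by blast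
  define k where "k = card \<sigma>"
  obtain h where h: "bij_betw h {0..<k} \<sigma>"
    using ex_bij_betw_nat_finite[OF \<open>finite \<sigma>\<close>] unfolding k_def by blast
  define A where "A = mat k k (\<lambda>(i, j). r (h j) (Suc i))"
  define v where "v = vec k (\<lambda>j. c (h j))"
  have "det A \<noteq> 0"
    unfolding A_def using bij_betw_imp_inj_on[OF h] bij_betw_imp_surj_on[OF h] \<open>\<sigma> \<subseteq> S\<close> \<open>card \<sigma> \<le> e\<close>
    by (intro det_coordinate_matrix_nonzero[OF indep \<open>finite S\<close>]) (auto simp: k_def)
  moreover have "A *\<^sub>v v = 0\<^sub>v k"
  proof (rule eq_vecI)
    fix i assume "i < dim_vec (0\<^sub>v k :: real vec)"
    then have "Suc i \<in> {1..e}"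
      using \<open>card \<sigma> \<le> e\<close> by (simp add: k_def)
    have "(A *\<^sub>v v) $ i = (\<Sum>j\<in>{0..<k}. c (h j) * r (h j) (Suc i))"
      using \<open>i < _\<close> by (simp add: A_def v_def scalar_prod_def mult.commute)
    also have "\<dots> = (\<Sum>u\<in>\<sigma>. c u * r u (Suc i))"
      by (rule sum.reindex_bij_betw[OF h])
    finally show "(A *\<^sub>v v) $ i = 0\<^sub>v k $ i"
      using vanish \<open>Suc i \<in> {1..e}\<close> \<open>i < _\<close> by simp
  qed (simp add: A_def)
  moreover have "A \<in> carrier_mat k k" "v \<in> carrier_vec k"
    by (simp_all add: A_def v_def)
  ultimately have "v = 0\<^sub>v k"
    using det_0_iff_vec_prod_zero by blast
  then have "c (h j) = 0" if "j < k" for j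
    using that unfolding v_def by (metis index_vec index_zero_vec(1))
  then show ?thesis
    using bij_betw_imp_surj_on[OF h] \<open>u \<in> \<sigma>\<close> by auto
qed

lemma alg_indep_imp_lin_indep_on_faces:
  assumes "alg_indep \<rat> (S \<times> {1..e}) (\<lambda>(s, t). r s t)" and "finite S"
    and "\<And>\<sigma>. \<sigma> \<in> K \<Longrightarrow> \<sigma> \<subseteq> S \<and> card \<sigma> \<le> e"
  shows "lin_indep_on_faces K e r"
  unfolding lin_indep_on_faces_def using alg_indep_imp_lin_indep[OF assms(1,2)] assms(3) by blast

section \<open>Derivations along linear forms\<close>

lemma pderiv_lin_commute:
  assumes "finite W" "finite W'"
  shows "pderiv_lin W l (pderiv_lin W' l' f) = pderiv_lin W' l' (pderiv_lin W l f)"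
proof
  fix m
  let ?up = "\<lambda>m v. m(v := Suc (m v))"
  have "pderiv_lin W l (pderiv_lin W' l' f) m =
      (\<Sum>v\<in>W. \<Sum>u\<in>W'. l v * real (Suc (m v)) * (l' u * real (Suc (?up m v u)) * f (?up (?up m v) u)))"
    by (simp add: pderiv_lin_def sum_distrib_left)
  also have "\<dots> = (\<Sum>u\<in>W'. \<Sum>v\<in>W. l v * real (Suc (m v)) * (l' u * real (Suc (?up m v u)) * f (?up (?up m v) u)))"
    by (rule sum.swap)
  also have "\<dots> = (\<Sum>u\<in>W'. \<Sum>v\<in>W. l' u * real (Suc (m u)) * (l v * real (Suc (?up m u v)) * f (?up (?up m u) v)))"
  proof (intro sum.cong refl)
    fix u v
    show "l v * real (Suc (m v)) * (l' u * real (Suc (?up m v u)) * f (?up (?up m v) u)) =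
        l' u * real (Suc (m u)) * (l v * real (Suc (?up m u v)) * f (?up (?up m u) v))"
      by (cases "u = v") (auto simp: fun_upd_twist algebra_simps)
  qed
  also have "\<dots> = pderiv_lin W' l' (pderiv_lin W l f) m"
    by (simp add: pderiv_lin_def sum_distrib_left)
  finally show "pderiv_lin W l (pderiv_lin W' l' f) m = pderiv_lin W' l' (pderiv_lin W l f) m" .
qed

lemma pderiv_lin_pow_commute:
  assumes "finite W" "finite W'"
  shows "pderiv_lin W l ((pderiv_lin W' l' ^^ k) f) = (pderiv_lin W' l' ^^ k) (pderiv_lin W l f)"
  by (induction k) (simp_all add: pderiv_lin_commute[OF assms])

lemma pderiv_lin_add: "pderiv_lin W l (\<lambda>m. f m + g m) = (\<lambda>m. pderiv_lin W l f m + pderiv_lin W l g m)"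
  by (auto simp: pderiv_lin_def algebra_simps sum.distrib)

lemma pderiv_lin_smult: "pderiv_lin W l (\<lambda>m. c * f m) = (\<lambda>m. c * pderiv_lin W l f m)"
  by (auto simp: pderiv_lin_def algebra_simps sum_distrib_left)

lemma pderiv_lin_zero: "pderiv_lin W l (\<lambda>_. 0) = (\<lambda>_. 0)"
  by (auto simp: pderiv_lin_def)

lemma pderiv_lin_pow_add:
  "(pderiv_lin W l ^^ k) (\<lambda>m. f m + g m) = (\<lambda>m. (pderiv_lin W l ^^ k) f m + (pderiv_lin W l ^^ k) g m)"
  by (induction k) (auto simp: pderiv_lin_add)

lemma pderiv_lin_pow_smult: "(pderiv_lin W l ^^ k) (\<lambda>m. c * f m) = (\<lambda>m. c * (pderiv_lin W l ^^ k) f m)"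
  by (induction k) (auto simp: pderiv_lin_smult)

lemma pderiv_lin_pow_zero: "(pderiv_lin W l ^^ k) (\<lambda>_. 0) = (\<lambda>_. 0)"
  by (induction k) (auto simp: pderiv_lin_zero)

lemma pderiv_lin_add_forms:
  "pderiv_lin W l f m + pderiv_lin W l' f m = pderiv_lin W (\<lambda>v. l v + l' v) f m"
  by (auto simp: pderiv_lin_def algebra_simps sum.distrib)

lemma pderiv_lin_scale_form: "c * pderiv_lin W l f m = pderiv_lin W (\<lambda>v. c * l v) f m"
  by (simp add: pderiv_lin_def sum_distrib_left mult.assoc)

lemma pderiv_lin_cong: "(\<And>v. v \<in> W \<Longrightarrow> l v = l' v) \<Longrightarrow> pderiv_lin W l f = pderiv_lin W l' f"
  unfolding pderiv_lin_def by (auto intro!: sum.cong)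

lemma pderiv_lin_insert:
  "finite W \<Longrightarrow> v \<notin> W \<Longrightarrow>
    pderiv_lin (insert v W) l f m = l v * real (Suc (m v)) * f (m(v := Suc (m v))) + pderiv_lin W l f m"
  by (simp add: pderiv_lin_def)

lemma pderiv_lin_nonzeroE:
  assumes "pderiv_lin W l f m \<noteq> 0"
  obtains v where "v \<in> W" "f (m(v := Suc (m v))) \<noteq> 0"
  using assms unfolding pderiv_lin_def by (metis (no_types, lifting) mult_eq_0_iff sum.neutral)

lemma pderiv_lin_pow_in_subfield:
  assumes K: "is_subfield K" and "\<And>m. g m \<in> K" and "\<And>v. v \<in> W \<Longrightarrow> l v \<in> K"
  shows "(pderiv_lin W l ^^ k) g m \<in> K"
proof (induction k arbitrary: m)
  case 0
  then show ?case using assms(2) by simp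
next
  case (Suc k)
  then show ?case
    unfolding funpow.simps comp_def pderiv_lin_def
    using K assms(3) is_subfield_of_nat[OF K]
    by (intro is_subfield_sum[OF K]) (simp add: is_subfield_def)
qed

lemma mon_deg_eq_sum: "finite A \<Longrightarrow> mon_supp m \<subseteq> A \<Longrightarrow> mon_deg m = (\<Sum>v\<in>A. m v)"
  unfolding mon_deg_def by (rule sum.mono_neutral_left) (auto simp: mon_supp_def)

lemma mon_supp_upd_Suc: "mon_supp (m(v := Suc (m v))) = insert v (mon_supp m)"
  by (auto simp: mon_supp_def)

lemma mon_deg_upd_Suc:
  assumes "finite (mon_supp m)"
  shows "mon_deg (m(v := Suc (m v))) = Suc (mon_deg m)"
proof -
  let ?A = "insert v (mon_supp m)"
  have "mon_deg (m(v := Suc (m v))) = (\<Sum>u\<in>?A. m u + of_bool (u = v))"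
    using assms by (subst mon_deg_eq_sum[of ?A]) (auto simp: mon_supp_upd_Suc intro!: sum.cong)
  also have "\<dots> = (\<Sum>u\<in>?A. m u) + 1"
    using assms by (simp add: sum.distrib)
  also have "(\<Sum>u\<in>?A. m u) = mon_deg m"
    using assms by (intro mon_deg_eq_sum[symmetric]) auto
  finally show ?thesis by (metis Suc_eq_plus1)
qed

lemma mon_deg_split:
  assumes "finite (mon_supp m)"
  shows "mon_deg m = m v + mon_deg (m(v := 0))"
proof -
  let ?A = "insert v (mon_supp m)"
  have "mon_deg m = (\<Sum>u\<in>?A. m u)"
    using assms by (intro mon_deg_eq_sum) auto
  also have "\<dots> = m v + (\<Sum>u\<in>?A - {v}. m u)"
    using assms by (intro sum.remove) auto
  also have "(\<Sum>u\<in>?A - {v}. m u) = mon_deg (m(v := 0))"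
    using assms by (subst mon_deg_eq_sum[of "?A - {v}"]) (auto simp: mon_supp_def intro!: sum.cong)
  finally show ?thesis .
qed

lemma card_mon_supp_le_mon_deg: "finite (mon_supp m) \<Longrightarrow> card (mon_supp m) \<le> mon_deg m"
  unfolding mon_deg_def using sum_mono[of "mon_supp m" "\<lambda>_. 1" m] by (simp add: mon_supp_def)

lemma mon_supp_sqfree: "mon_supp (sqfree \<sigma>) = \<sigma>"
  by (auto simp: mon_supp_def sqfree_def)

lemma sqfree_insert: "s \<notin> \<rho> \<Longrightarrow> (sqfree \<rho>)(s := Suc (sqfree \<rho> s)) = sqfree (insert s \<rho>)"
  by (auto simp: sqfree_def)

lemma exponents_le_1_imp_sqfree:
  assumes "\<And>v. m v \<le> 1"
  shows "m = sqfree (mon_supp m)" "mon_deg m = card (mon_supp m)"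
proof -
  show "m = sqfree (mon_supp m)"
  proof
    fix v show "m v = sqfree (mon_supp m) v"
      using assms[of v] by (auto simp: sqfree_def mon_supp_def)
  qed
  then show "mon_deg m = card (mon_supp m)"
    by (metis mon_deg_def mon_supp_sqfree sqfree_def card_eq_sum sum.cong)
qed

section \<open>Stresses of generic frameworks\<close>

definition hom_supported :: "nat set set \<Rightarrow> nat \<Rightarrow> poly_r \<Rightarrow> bool" where
  "hom_supported K j f \<longleftrightarrow> (\<forall>m. f m \<noteq> 0 \<longrightarrow> mon_supp m \<in> K \<and> mon_deg m = j)"

lemma simplicial_complex_subset:
  "simplicial_complex V K \<Longrightarrow> \<sigma> \<in> K \<Longrightarrow> \<tau> \<subseteq> \<sigma> \<Longrightarrow> \<tau> \<in> K"
  unfolding simplicial_complex_def by blast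

lemma simplicial_complex_face_subset:
  "simplicial_complex V K \<Longrightarrow> \<sigma> \<in> K \<Longrightarrow> \<sigma> \<subseteq> V"
  unfolding simplicial_complex_def by auto

lemma simplicial_complex_finite_face:
  "simplicial_complex V K \<Longrightarrow> \<sigma> \<in> K \<Longrightarrow> finite \<sigma>"
  unfolding simplicial_complex_def by (meson PowD finite_subset subsetD)

lemma hom_supported_pderiv_pow:
  assumes K: "simplicial_complex V K" and f: "hom_supported K j f"
    and "(pderiv_lin W l ^^ k) f m \<noteq> 0"
  shows "mon_supp m \<in> K \<and> mon_deg m + k = j"
  using assms(3)
proof (induction k arbitrary: m)
  case 0
  then show ?case
    using f by (simp add: hom_supported_def)
next
  case (Suc k)
  then obtain v where "(pderiv_lin W l ^^ k) f (m(v := Suc (m v))) \<noteq> 0"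
    by (auto elim: pderiv_lin_nonzeroE)
  from Suc.IH[OF this]
  have face: "insert v (mon_supp m) \<in> K" and deg: "mon_deg (m(v := Suc (m v))) + k = j"
    unfolding mon_supp_upd_Suc by blast+
  have "finite (mon_supp m)"
    using simplicial_complex_finite_face[OF K face] by simp
  then show ?case
    using deg mon_deg_upd_Suc simplicial_complex_subset[OF K face] by auto
qed

text \<open>The stress condition at \<open>m - e\<^sub>v\<close> is a linear relation among the vectors \<open>r(u)\<close> with
  coefficients \<open>(1 + m'\<^sub>u) \<omega>(m' + e\<^sub>u)\<close>, \<open>m' = m - e\<^sub>v\<close>; if all of them vanished off the face
  \<open>mon_supp m\<close>, independence on that face would force \<open>\<omega> m = 0\<close>.\<close>
lemma stress_nonzero_coeff_spreads:
  assumes K: "simplicial_complex W K" and indep: "lin_indep_on_faces K e r"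
    and stress: "\<forall>t\<in>{1..e}. pderiv_lin W (\<lambda>v. r v t) \<omega> = (\<lambda>_. 0)"
    and face: "mon_supp m \<in> K" and "1 < m v" and "\<omega> m \<noteq> 0"
  obtains u where "u \<in> W - mon_supp m" "\<omega> (m(v := m v - 1, u := 1)) \<noteq> 0"
proof -
  define m' where "m' = m(v := m v - 1)"
  have supp: "mon_supp m' = mon_supp m" and m: "m'(v := Suc (m' v)) = m"
    using \<open>1 < m v\<close> by (auto simp: m'_def mon_supp_def)
  have "finite W" "mon_supp m \<subseteq> W"
    using K simplicial_complex_face_subset[OF K face] by (auto simp: simplicial_complex_def)
  define c where "c u = real (Suc (m' u)) * \<omega> (m'(u := Suc (m' u)))" for u
  have "\<exists>u\<in>W - mon_supp m. c u \<noteq> 0"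
  proof (rule ccontr)
    assume outside_zero: "\<not> ?thesis"
    have "(\<Sum>u\<in>mon_supp m. c u * r u t) = 0" if "t \<in> {1..e}" for t
    proof -
      have "(\<Sum>u\<in>mon_supp m. c u * r u t) = (\<Sum>u\<in>W. c u * r u t)"
        using outside_zero \<open>mon_supp m \<subseteq> W\<close> \<open>finite W\<close> by (intro sum.mono_neutral_left) auto
      also have "\<dots> = pderiv_lin W (\<lambda>v. r v t) \<omega> m'"
        by (simp add: pderiv_lin_def c_def mult_ac)
      finally show ?thesis
        using stress that by simp
    qed
    moreover have "v \<in> mon_supp m"
      using \<open>1 < m v\<close> by (simp add: mon_supp_def)
    ultimately have "c v = 0"
      using indep face unfolding lin_indep_on_faces_def by blast
    then show False
      using \<open>\<omega> m \<noteq> 0\<close> m by (simp add: c_def)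
  qed
  then obtain u where u: "u \<in> W - mon_supp m" and "c u \<noteq> 0"
    by blast
  moreover have "m'(u := Suc (m' u)) = m(v := m v - 1, u := 1)"
    using u \<open>1 < m v\<close> by (auto simp: m'_def mon_supp_def)
  ultimately show thesis
    using that by (simp add: c_def)
qed

lemma stress_dominated_by_squarefree:
  assumes K: "simplicial_complex W K" and indep: "lin_indep_on_faces K e r"
    and stress: "\<forall>t\<in>{1..e}. pderiv_lin W (\<lambda>v. r v t) \<omega> = (\<lambda>_. 0)"
    and hom: "hom_supported K i \<omega>" and "\<omega> m \<noteq> 0"
  shows "\<exists>\<sigma>. finite \<sigma> \<and> card \<sigma> = i \<and> mon_supp m \<subseteq> \<sigma> \<and> \<omega> (sqfree \<sigma>) \<noteq> 0"
  using \<open>\<omega> m \<noteq> 0\<close>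
proof (induction "mon_deg m - card (mon_supp m)" arbitrary: m rule: less_induct)
  case less
  have face: "mon_supp m \<in> K" and deg: "mon_deg m = i"
    using hom less.prems by (auto simp: hom_supported_def)
  have fin: "finite (mon_supp m)"
    using simplicial_complex_finite_face[OF K face] .
  show ?case
  proof (cases "\<forall>v. m v \<le> 1")
    case True
    then show ?thesis
      using exponents_le_1_imp_sqfree[of m] deg fin less.prems by (metis order_refl)
  next
    case False
    then obtain v where "1 < m v"
      by (auto simp: not_le)
    obtain u where u: "u \<in> W - mon_supp m" and nonzero: "\<omega> (m(v := m v - 1, u := 1)) \<noteq> 0"
      using stress_nonzero_coeff_spreads[OF K indep stress face \<open>1 < m v\<close> less.prems] .
    let ?m' = "m(v := m v - 1, u := 1)"
    have supp': "mon_supp ?m' = insert u (mon_supp m)"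
      using u \<open>1 < m v\<close> by (auto simp: mon_supp_def)
    have "card (mon_supp ?m') = Suc (card (mon_supp m))"
      using supp' u fin by simp
    moreover have "card (mon_supp ?m') \<le> mon_deg ?m'"
      using fin supp' by (intro card_mon_supp_le_mon_deg) simp
    moreover have "mon_deg ?m' = i"
      using hom nonzero by (simp add: hom_supported_def)
    ultimately have "mon_deg ?m' - card (mon_supp ?m') < mon_deg m - card (mon_supp m)"
      using deg by simp
    from less.hyps[OF this nonzero] show ?thesis
      using supp' by blast
  qed
qed

section \<open>The lift to the cone\<close>

definition scale_vars :: "nat set \<Rightarrow> (nat \<Rightarrow> real) \<Rightarrow> poly_r \<Rightarrow> poly_r" where
  "scale_vars W b f = (\<lambda>m. f m * (\<Prod>v\<in>W. b v ^ m v))"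

lemma prod_power_upd_Suc:
  assumes "finite W" "u \<in> W"
  shows "(\<Prod>v\<in>W. b v ^ (m(u := Suc (m u))) v) = b u * (\<Prod>v\<in>W. b v ^ m v)"
proof -
  have "(\<Prod>v\<in>W. b v ^ (m(u := Suc (m u))) v) = (\<Prod>v\<in>W. (if v = u then b v else 1) * b v ^ m v)"
    by (rule prod.cong) auto
  also have "\<dots> = b u * (\<Prod>v\<in>W. b v ^ m v)"
    using assms by (simp add: prod.distrib)
  finally show ?thesis .
qed

lemma pderiv_lin_scale_vars:
  assumes "finite W"
  shows "pderiv_lin W l (scale_vars W b f) = scale_vars W b (pderiv_lin W (\<lambda>v. l v * b v) f)"
proof
  fix m
  have "pderiv_lin W l (scale_vars W b f) m =
      (\<Sum>v\<in>W. l v * b v * real (Suc (m v)) * f (m(v := Suc (m v)))) * (\<Prod>v\<in>W. b v ^ m v)"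
    unfolding pderiv_lin_def scale_vars_def sum_distrib_right
  proof (intro sum.cong refl)
    fix v assume "v \<in> W"
    then show "l v * real (Suc (m v)) * (f (m(v := Suc (m v))) * (\<Prod>u\<in>W. b u ^ (m(v := Suc (m v))) u)) =
        l v * b v * real (Suc (m v)) * f (m(v := Suc (m v))) * (\<Prod>u\<in>W. b u ^ m u)"
      by (simp only: prod_power_upd_Suc[OF assms] mult_ac)
  qed
  then show "pderiv_lin W l (scale_vars W b f) m = scale_vars W b (pderiv_lin W (\<lambda>v. l v * b v) f) m"
    by (simp add: scale_vars_def pderiv_lin_def)
qed

lemma scale_vars_add: "scale_vars W b (\<lambda>m. f m + g m) = (\<lambda>m. scale_vars W b f m + scale_vars W b g m)"
  by (simp add: scale_vars_def algebra_simps)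

lemma scale_vars_smult: "scale_vars W b (\<lambda>m. c * f m) = (\<lambda>m. c * scale_vars W b f m)"
  by (simp add: scale_vars_def algebra_simps)

text \<open>\<open>exp(x\<^sub>0 \<partial>\<^sub>l) g = \<Sum>\<^sub>k x\<^sub>0\<^sup>k/k! \<partial>\<^sub>l\<^sup>k g\<close>, described coefficientwise; only the part of \<open>g\<close>
  free of \<open>x\<^sub>0\<close> is read.\<close>
definition exp_x0_pderiv :: "nat set \<Rightarrow> (nat \<Rightarrow> real) \<Rightarrow> poly_r \<Rightarrow> poly_r" where
  "exp_x0_pderiv W l g = (\<lambda>m. (pderiv_lin W l ^^ m 0) g (m(0 := 0)) / fact (m 0))"

lemma exp_x0_pderiv_add:
  "exp_x0_pderiv W l (\<lambda>m. f m + g m) = (\<lambda>m. exp_x0_pderiv W l f m + exp_x0_pderiv W l g m)"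
  by (simp add: exp_x0_pderiv_def pderiv_lin_pow_add add_divide_distrib)

lemma exp_x0_pderiv_smult: "exp_x0_pderiv W l (\<lambda>m. c * f m) = (\<lambda>m. c * exp_x0_pderiv W l f m)"
  by (simp add: exp_x0_pderiv_def pderiv_lin_pow_smult)

lemma exp_x0_pderiv_zero: "exp_x0_pderiv W l (\<lambda>_. 0) = (\<lambda>_. 0)"
  by (simp add: exp_x0_pderiv_def pderiv_lin_pow_zero)

lemma pderiv_lin_exp_x0_pderiv:
  assumes "finite W" "0 \<notin> W"
  shows "pderiv_lin W l' (exp_x0_pderiv W l g) = exp_x0_pderiv W l (pderiv_lin W l' g)"
proof
  fix m
  have "pderiv_lin W l' (exp_x0_pderiv W l g) m =
      pderiv_lin W l' ((pderiv_lin W l ^^ m 0) g) (m(0 := 0)) / fact (m 0)"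
    using assms(2) unfolding pderiv_lin_def exp_x0_pderiv_def sum_divide_distrib
    by (intro sum.cong refl) (auto simp: fun_upd_twist)
  then show "pderiv_lin W l' (exp_x0_pderiv W l g) m = exp_x0_pderiv W l (pderiv_lin W l' g) m"
    by (simp add: exp_x0_pderiv_def pderiv_lin_pow_commute[OF assms(1,1)])
qed

lemma exp_x0_pderiv_x0:
  "real (Suc (m 0)) * exp_x0_pderiv W l g (m(0 := Suc (m 0))) = exp_x0_pderiv W l (pderiv_lin W l g) m"
  by (simp add: exp_x0_pderiv_def funpow_Suc_right del: funpow.simps of_nat_Suc)

lemma pderiv_lin_insert_0_exp_x0_pderiv:
  assumes "finite W" "0 \<notin> W"
  shows "pderiv_lin (insert 0 W) l' (exp_x0_pderiv W l g) =
    exp_x0_pderiv W l (\<lambda>m. l' 0 * pderiv_lin W l g m + pderiv_lin W l' g m)"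
proof
  fix m
  show "pderiv_lin (insert 0 W) l' (exp_x0_pderiv W l g) m =
      exp_x0_pderiv W l (\<lambda>m. l' 0 * pderiv_lin W l g m + pderiv_lin W l' g m) m"
    using assms
    by (simp add: pderiv_lin_insert exp_x0_pderiv_x0[symmetric] exp_x0_pderiv_add
        exp_x0_pderiv_smult pderiv_lin_exp_x0_pderiv mult.assoc)
qed

lemma exp_x0_pderiv_sqfree:
  assumes "0 \<notin> \<sigma>"
  shows "exp_x0_pderiv W l g (sqfree \<sigma>) = g (sqfree \<sigma>)"
proof -
  have "sqfree \<sigma> 0 = 0" "(sqfree \<sigma>)(0 := 0) = sqfree \<sigma>"
    using assms by (auto simp: sqfree_def)
  then show ?thesis
    by (simp add: exp_x0_pderiv_def)
qed

lemma exp_x0_pderiv_sqfree_insert_0: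
  assumes "0 \<notin> \<rho>"
  shows "exp_x0_pderiv W l g (sqfree (insert 0 \<rho>)) = pderiv_lin W l g (sqfree \<rho>)"
proof -
  have "sqfree (insert 0 \<rho>) 0 = 1" "(sqfree (insert 0 \<rho>))(0 := 0) = sqfree \<rho>"
    using assms by (auto simp: sqfree_def)
  then show ?thesis
    by (simp add: exp_x0_pderiv_def)
qed

lemma exp_x0_pderiv_in_subfield:
  assumes K: "is_subfield K" and "\<And>m. g m \<in> K" and "\<And>v. v \<in> W \<Longrightarrow> l v \<in> K"
  shows "exp_x0_pderiv W l g m \<in> K"
  unfolding exp_x0_pderiv_def
  using pderiv_lin_pow_in_subfield[OF assms] is_subfield_of_nat[OF K, of "fact (m 0)"] K
  by (simp add: is_subfield_def divide_inverse)

lemma hom_supported_exp_x0_pderiv: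
  assumes K: "simplicial_complex V K" and g: "hom_supported K i g"
  shows "hom_supported (cone0 K) i (exp_x0_pderiv W l g)"
  unfolding hom_supported_def
proof (intro allI impI)
  fix m assume "exp_x0_pderiv W l g m \<noteq> 0"
  then have "(pderiv_lin W l ^^ m 0) g (m(0 := 0)) \<noteq> 0"
    by (simp add: exp_x0_pderiv_def)
  from hom_supported_pderiv_pow[OF K g this]
  have face: "mon_supp (m(0 := 0)) \<in> K" and deg: "mon_deg (m(0 := 0)) + m 0 = i"
    by auto
  have supp: "mon_supp (m(0 := 0)) = mon_supp m - {0}"
    by (auto simp: mon_supp_def)
  then have "finite (mon_supp m)"
    using simplicial_complex_finite_face[OF K face] by simp
  then have "mon_deg m = i"
    using deg mon_deg_split[of m 0] by simp
  moreover have "mon_supp m \<in> cone0 K"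
    using face supp unfolding cone0_def by (cases "0 \<in> mon_supp m") (auto simp: insert_absorb)
  ultimately show "mon_supp m \<in> cone0 K \<and> mon_deg m = i" by simp
qed

text \<open>The map \<open>\<psi>\<^sub>i\<close> of the statement; it does not depend on \<open>i\<close>.\<close>
definition cone_lift :: "nat \<Rightarrow> (nat \<Rightarrow> real) \<Rightarrow> poly_r \<Rightarrow> poly_r" where
  "cone_lift n a \<omega> = exp_x0_pderiv {1..n} a (scale_vars {1..n} (\<lambda>v. inverse (1 + a v)) \<omega>)"

lemma cone_lift_add: "cone_lift n a (\<lambda>m. f m + g m) = (\<lambda>m. cone_lift n a f m + cone_lift n a g m)"
  by (simp add: cone_lift_def scale_vars_add exp_x0_pderiv_add)

lemma cone_lift_smult: "cone_lift n a (\<lambda>m. c * f m) = (\<lambda>m. c * cone_lift n a f m)"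
  by (simp add: cone_lift_def scale_vars_smult exp_x0_pderiv_smult)

lemma cone_lift_zero: "cone_lift n a (\<lambda>_. 0) = (\<lambda>_. 0)"
  by (simp add: cone_lift_def scale_vars_def exp_x0_pderiv_zero)

lemma simplicial_complex_finite: "simplicial_complex V K \<Longrightarrow> finite K"
  unfolding simplicial_complex_def by (meson finite_Pow_iff finite_subset)

lemma card_le_cdim1: "simplicial_complex V K \<Longrightarrow> \<sigma> \<in> K \<Longrightarrow> card \<sigma> \<le> cdim1 K"
  unfolding cdim1_def using simplicial_complex_finite by simp

lemma subset_card_SucE:
  assumes "finite \<sigma>" "\<rho> \<subseteq> \<sigma>" "card \<sigma> = Suc (card \<rho>)"
  obtains s where "s \<notin> \<rho>" "\<sigma> = insert s \<rho>"
proof -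
  have "card (\<sigma> - \<rho>) = 1"
    using assms by (simp add: card_Diff_subset finite_subset)
  then obtain s where "\<sigma> - \<rho> = {s}"
    by (rule card_1_singletonE)
  then show thesis
    using that assms(2) by blast
qed

lemma in_cone0I:
  assumes "\<tau> - {0} \<in> L"
  shows "\<tau> \<in> cone0 L"
proof (cases "0 \<in> \<tau>")
  case True
  then have "\<tau> = insert 0 (\<tau> - {0})"
    by blast
  then show ?thesis
    using assms unfolding cone0_def by blast
next
  case False
  then show ?thesis
    using assms unfolding cone0_def by simp
qed

locale cone_framework =
  fixes d n :: nat and \<Lambda> :: "nat set set" and p' :: "nat \<Rightarrow> nat \<Rightarrow> real"
    and a :: "nat \<Rightarrow> real" and F F' :: "real set" and p :: "nat \<Rightarrow> nat \<Rightarrow> real"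
  assumes d_pos: "1 \<le> d"
    and complex: "simplicial_complex {1..n} \<Lambda>"
    and dim: "cdim1 \<Lambda> = d - 1"
    and generic: "lin_indep_on_faces \<Lambda> (d - 1) p'"
    and subfield_F': "is_subfield F'" and a_indep: "alg_indep F' {1..n} a"
    and subfield_F: "is_subfield F" and F'_subset: "F' \<subseteq> F" and a_in_F: "a ` {1..n} \<subseteq> F"
    and p_eq: "p = (\<lambda>s t. if s = 0 then (if t = d then -1 else 0)
                    else if t = d then a s else (1 + a s) * p' s t)"
begin

lemma one_plus_a_nonzero: "s \<in> {1..n} \<Longrightarrow> 1 + a s \<noteq> 0"
  using alg_indep_one_plus_nonzero[OF a_indep subfield_F'] by simp

lemma face_subset: "\<sigma> \<in> \<Lambda> \<Longrightarrow> \<sigma> \<subseteq> {1..n}"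
  using simplicial_complex_face_subset[OF complex] .

lemma vertices: "\<Union>\<Lambda> = {1..n}"
proof
  show "\<Union>\<Lambda> \<subseteq> {1..n}"
    using face_subset by blast
  show "{1..n} \<subseteq> \<Union>\<Lambda>"
  proof
    fix v assume "v \<in> {1..n}"
    then have "{v} \<in> \<Lambda>"
      using complex by (simp add: simplicial_complex_def)
    then show "v \<in> \<Union>\<Lambda>" by blast
  qed
qed

lemma cone_vertices: "\<Union>(cone0 \<Lambda>) = {0..n}"
proof -
  obtain \<sigma> where "\<sigma> \<in> \<Lambda>"
    using complex by (auto simp: simplicial_complex_def)
  then have "\<Union>(cone0 \<Lambda>) = insert 0 (\<Union>\<Lambda>)"
    unfolding cone0_def by blast
  then show ?thesis
    by (simp add: vertices atLeastAtMost_insertL)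
qed

lemma cdim1_cone_le: "cdim1 (cone0 \<Lambda>) \<le> d"
proof -
  have "card \<tau> \<le> d" if "\<tau> \<in> cone0 \<Lambda>" for \<tau>
  proof -
    obtain \<sigma> where "\<sigma> \<in> \<Lambda>" "\<tau> = \<sigma> \<or> \<tau> = insert 0 \<sigma>"
      using \<open>\<tau> \<in> cone0 \<Lambda>\<close> unfolding cone0_def by blast
    moreover have "card \<sigma> \<le> d - 1"
      using card_le_cdim1[OF complex \<open>\<sigma> \<in> \<Lambda>\<close>] dim by simp
    ultimately show ?thesis
      using d_pos simplicial_complex_finite_face[OF complex] by (auto simp: card_insert_if)
  qed
  moreover have "cone0 \<Lambda> \<noteq> {}"
    using complex by (auto simp: cone0_def simplicial_complex_def)
  ultimately show ?thesis
    using simplicial_complex_finite[OF complex] unfolding cdim1_def cone0_def by simp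
qed

lemma lin_stressesD:
  assumes "\<omega> \<in> lin_stresses \<Lambda> p' F' i"
  shows "\<And>m. \<omega> m \<in> F'" and "hom_supported \<Lambda> i \<omega>"
    and "\<forall>t\<in>{1..d - 1}. pderiv_lin {1..n} (\<lambda>v. p' v t) \<omega> = (\<lambda>_. 0)"
  using assms unfolding lin_stresses_def hom_supported_def dim vertices by auto

lemma stress_sqfree_face:
  "\<omega> \<in> lin_stresses \<Lambda> p' F' i \<Longrightarrow> \<omega> (sqfree \<sigma>) \<noteq> 0 \<Longrightarrow> \<sigma> \<in> \<Lambda>"
  using lin_stressesD(2) mon_supp_sqfree[of \<sigma>] by (metis hom_supported_def)

lemma pderiv_lin_rescaled:
  "pderiv_lin {1..n} (\<lambda>v. (1 + a v) * l v) (scale_vars {1..n} (\<lambda>v. inverse (1 + a v)) f) =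
    scale_vars {1..n} (\<lambda>v. inverse (1 + a v)) (pderiv_lin {1..n} l f)"
proof -
  have "pderiv_lin {1..n} (\<lambda>v. (1 + a v) * l v * inverse (1 + a v)) f = pderiv_lin {1..n} l f"
    using one_plus_a_nonzero by (intro pderiv_lin_cong) simp
  then show ?thesis
    by (simp add: pderiv_lin_scale_vars)
qed

text \<open>The hypothesis holds for the last coordinate of \<open>p\<close> with \<open>l' = 0\<close>, for the other
  coordinates \<open>t\<close> with \<open>l' = p'(-)\<^sub>t\<close>, and for the form \<open>c\<close> with \<open>l' = 1\<close>.\<close>
lemma pderiv_lin_cone_lift:
  assumes "\<And>v. v \<in> {1..n} \<Longrightarrow> l 0 * a v + l v = (1 + a v) * l' v"
  shows "pderiv_lin {0..n} l (cone_lift n a \<omega>) = cone_lift n a (pderiv_lin {1..n} l' \<omega>)"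
proof -
  let ?g = "scale_vars {1..n} (\<lambda>v. inverse (1 + a v)) \<omega>"
  have "{0..n} = insert 0 {1..n}"
    by auto
  then have "pderiv_lin {0..n} l (cone_lift n a \<omega>) = pderiv_lin (insert 0 {1..n}) l (exp_x0_pderiv {1..n} a ?g)"
    unfolding cone_lift_def by simp
  also have "\<dots> = exp_x0_pderiv {1..n} a (\<lambda>m. l 0 * pderiv_lin {1..n} a ?g m + pderiv_lin {1..n} l ?g m)"
    by (rule pderiv_lin_insert_0_exp_x0_pderiv) auto
  also have "(\<lambda>m. l 0 * pderiv_lin {1..n} a ?g m + pderiv_lin {1..n} l ?g m) =
      pderiv_lin {1..n} (\<lambda>v. (1 + a v) * l' v) ?g"
    unfolding pderiv_lin_scale_form pderiv_lin_add_forms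
    using assms by (intro ext pderiv_lin_cong[THEN fun_cong]) simp
  also have "\<dots> = scale_vars {1..n} (\<lambda>v. inverse (1 + a v)) (pderiv_lin {1..n} l' \<omega>)"
    by (rule pderiv_lin_rescaled)
  finally show ?thesis
    unfolding cone_lift_def .
qed

lemma pderiv_lin_ones_cone_lift:
  "pderiv_lin {0..n} (\<lambda>_. 1) (cone_lift n a \<omega>) = cone_lift n a (pderiv_lin {1..n} (\<lambda>_. 1) \<omega>)"
  by (rule pderiv_lin_cone_lift) simp

lemma cone_lift_equilibrium:
  assumes "\<omega> \<in> lin_stresses \<Lambda> p' F' i" and "t \<in> {1..d}"
  shows "pderiv_lin {0..n} (\<lambda>v. p v t) (cone_lift n a \<omega>) = (\<lambda>_. 0)"
proof (cases "t = d")
  case True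
  then have "pderiv_lin {0..n} (\<lambda>v. p v t) (cone_lift n a \<omega>) = cone_lift n a (pderiv_lin {1..n} (\<lambda>_. 0) \<omega>)"
    by (intro pderiv_lin_cone_lift) (simp add: p_eq)
  then show ?thesis
    by (simp add: pderiv_lin_def cone_lift_zero)
next
  case False
  then have "pderiv_lin {0..n} (\<lambda>v. p v t) (cone_lift n a \<omega>) = cone_lift n a (pderiv_lin {1..n} (\<lambda>v. p' v t) \<omega>)"
    by (intro pderiv_lin_cone_lift) (simp add: p_eq)
  moreover have "t \<in> {1..d - 1}"
    using assms(2) False by auto
  ultimately show ?thesis
    using lin_stressesD(3)[OF assms(1)] by (simp add: cone_lift_zero)
qed

lemma cone_lift_in_F:
  assumes "\<omega> \<in> lin_stresses \<Lambda> p' F' i"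
  shows "cone_lift n a \<omega> m \<in> F"
proof -
  have inverse_in_F: "inverse (1 + a v) \<in> F" if "v \<in> {1..n}" for v
  proof -
    have "a v \<in> F"
      using that a_in_F by blast
    then show ?thesis
      using subfield_F by (simp add: is_subfield_def)
  qed
  have "scale_vars {1..n} (\<lambda>v. inverse (1 + a v)) \<omega> m \<in> F" for m
  proof -
    have "(\<Prod>v\<in>{1..n}. inverse (1 + a v) ^ m v) \<in> F"
      using inverse_in_F by (intro is_subfield_prod[OF subfield_F] is_subfield_power[OF subfield_F])
    moreover have "\<omega> m \<in> F"
      using lin_stressesD(1)[OF assms] F'_subset by blast
    ultimately show ?thesis
      using subfield_F unfolding scale_vars_def is_subfield_def by blast
  qed
  then show ?thesis
    unfolding cone_lift_def using a_in_F by (intro exp_x0_pderiv_in_subfield[OF subfield_F]) auto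
qed

lemma cone_lift_stress:
  assumes \<omega>: "\<omega> \<in> lin_stresses \<Lambda> p' F' i"
  shows "cone_lift n a \<omega> \<in> lin_stresses (cone0 \<Lambda>) p F i"
proof -
  have "hom_supported \<Lambda> i (scale_vars {1..n} (\<lambda>v. inverse (1 + a v)) \<omega>)"
    using lin_stressesD(2)[OF \<omega>] by (simp add: hom_supported_def scale_vars_def)
  then have "hom_supported (cone0 \<Lambda>) i (cone_lift n a \<omega>)"
    unfolding cone_lift_def by (rule hom_supported_exp_x0_pderiv[OF complex])
  then show ?thesis
    using cone_lift_in_F[OF \<omega>] cone_lift_equilibrium[OF \<omega>] cdim1_cone_le
    unfolding lin_stresses_def hom_supported_def cone_vertices by auto
qed

lemma cone_lift_sqfree_nonzero_iff:
  assumes "0 \<notin> \<sigma>"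
  shows "cone_lift n a \<omega> (sqfree \<sigma>) \<noteq> 0 \<longleftrightarrow> \<omega> (sqfree \<sigma>) \<noteq> 0"
  using assms one_plus_a_nonzero
  by (simp add: cone_lift_def exp_x0_pderiv_sqfree scale_vars_def)

lemma cone_lift_sqfree_insert_0:
  assumes "0 \<notin> \<rho>"
  shows "cone_lift n a \<omega> (sqfree (insert 0 \<rho>)) =
    pderiv_lin {1..n} (\<lambda>v. a v / (1 + a v)) \<omega> (sqfree \<rho>) * (\<Prod>v\<in>{1..n}. inverse (1 + a v) ^ sqfree \<rho> v)"
proof -
  have "cone_lift n a \<omega> (sqfree (insert 0 \<rho>)) =
      pderiv_lin {1..n} a (scale_vars {1..n} (\<lambda>v. inverse (1 + a v)) \<omega>) (sqfree \<rho>)"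
    using assms by (simp add: cone_lift_def exp_x0_pderiv_sqfree_insert_0)
  also have "\<dots> = scale_vars {1..n} (\<lambda>v. inverse (1 + a v))
      (pderiv_lin {1..n} (\<lambda>v. a v * inverse (1 + a v)) \<omega>) (sqfree \<rho>)"
    by (simp only: pderiv_lin_scale_vars[OF finite_atLeastAtMost])
  finally show ?thesis
    by (simp add: scale_vars_def divide_inverse)
qed

text \<open>The coefficients \<open>(1 + m\<^sub>s) \<omega>(m + e\<^sub>s)\<close> of the derivative lie in \<open>F'\<close>, over which the
  \<open>a\<^sub>s / (1 + a\<^sub>s)\<close> are linearly independent; a nonzero coefficient with \<open>s \<in> \<rho>\<close> is traded for one
  with \<open>s \<notin> \<rho>\<close> by genericity of \<open>p'\<close>.\<close>
lemma pderiv_lin_frac_stress_nonzero_iff: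
  assumes \<omega>: "\<omega> \<in> lin_stresses \<Lambda> p' F' i" and \<rho>: "finite \<rho>" "Suc (card \<rho>) = i"
  shows "pderiv_lin {1..n} (\<lambda>v. a v / (1 + a v)) \<omega> (sqfree \<rho>) \<noteq> 0 \<longleftrightarrow>
    (\<exists>s. s \<notin> \<rho> \<and> \<omega> (sqfree (insert s \<rho>)) \<noteq> 0)"
proof
  note stress = lin_stressesD[OF \<omega>]
  let ?m = "sqfree \<rho>"
  assume "pderiv_lin {1..n} (\<lambda>v. a v / (1 + a v)) \<omega> ?m \<noteq> 0"
  then obtain s where "\<omega> (?m(s := Suc (?m s))) \<noteq> 0"
    by (elim pderiv_lin_nonzeroE)
  then obtain \<sigma> where \<sigma>: "finite \<sigma>" "card \<sigma> = i" "insert s \<rho> \<subseteq> \<sigma>" "\<omega> (sqfree \<sigma>) \<noteq> 0"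
    using stress_dominated_by_squarefree[OF complex generic stress(3,2)]
    by (metis mon_supp_sqfree mon_supp_upd_Suc)
  moreover have "\<rho> \<subseteq> \<sigma>" "card \<sigma> = Suc (card \<rho>)"
    using \<sigma>(2,3) \<rho>(2) by auto
  ultimately obtain s' where "s' \<notin> \<rho>" "\<sigma> = insert s' \<rho>"
    by (elim subset_card_SucE)
  then show "\<exists>s. s \<notin> \<rho> \<and> \<omega> (sqfree (insert s \<rho>)) \<noteq> 0"
    using \<sigma>(4) by blast
next
  note stress = lin_stressesD[OF \<omega>]
  let ?m = "sqfree \<rho>"
  define c where "c s = real (Suc (?m s)) * \<omega> (?m(s := Suc (?m s)))" for s
  assume "\<exists>s. s \<notin> \<rho> \<and> \<omega> (sqfree (insert s \<rho>)) \<noteq> 0"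
  then obtain s where s: "s \<notin> \<rho>" "\<omega> (sqfree (insert s \<rho>)) \<noteq> 0"
    by blast
  then have "s \<in> {1..n}"
    using face_subset stress_sqfree_face[OF \<omega>] by blast
  moreover have "c s \<noteq> 0"
    using s by (simp add: c_def sqfree_insert)
  moreover have "c s \<in> F'" for s
    using stress(1) subfield_F' is_subfield_of_nat[OF subfield_F'] by (simp add: c_def is_subfield_def)
  ultimately have "(\<Sum>s\<in>{1..n}. c s * (a s / (1 + a s))) \<noteq> 0"
    using alg_indep_fractions_eq_0D[OF a_indep subfield_F' finite_atLeastAtMost] by blast
  then show "pderiv_lin {1..n} (\<lambda>v. a v / (1 + a v)) \<omega> ?m \<noteq> 0"
    by (simp add: pderiv_lin_def c_def mult_ac)
qed

lemma cone_lift_apex_nonzero_iff: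
  assumes "\<omega> \<in> lin_stresses \<Lambda> p' F' i" and "finite \<rho>" "0 \<notin> \<rho>" "Suc (card \<rho>) = i"
  shows "cone_lift n a \<omega> (sqfree (insert 0 \<rho>)) \<noteq> 0 \<longleftrightarrow> (\<exists>s. s \<notin> \<rho> \<and> \<omega> (sqfree (insert s \<rho>)) \<noteq> 0)"
proof -
  have "(\<Prod>v\<in>{1..n}. inverse (1 + a v) ^ sqfree \<rho> v) \<noteq> 0"
    using one_plus_a_nonzero by simp
  then show ?thesis
    using cone_lift_sqfree_insert_0[OF assms(3)] pderiv_lin_frac_stress_nonzero_iff[OF assms(1,2,4)]
    by simp
qed

lemma stress_supp_cone_lift_subset:
  assumes \<omega>: "\<omega> \<in> lin_stresses \<Lambda> p' F' i"
  shows "stress_supp i (cone_lift n a \<omega>) \<subseteq> skel (int i - 1) (cone0 (stress_supp i \<omega>))"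
proof
  fix \<tau> assume "\<tau> \<in> stress_supp i (cone_lift n a \<omega>)"
  then obtain \<sigma> where \<sigma>: "finite \<sigma>" "card \<sigma> = i" "cone_lift n a \<omega> (sqfree \<sigma>) \<noteq> 0" "\<tau> \<subseteq> \<sigma>"
    unfolding stress_supp_def by blast
  have "\<tau> - {0} \<in> stress_supp i \<omega>"
  proof (cases "0 \<in> \<sigma>")
    case False
    then have "\<omega> (sqfree \<sigma>) \<noteq> 0"
      using cone_lift_sqfree_nonzero_iff[OF False] \<sigma>(3) by simp
    then show ?thesis
      unfolding stress_supp_def using \<sigma> by blast
  next
    case True
    let ?\<rho> = "\<sigma> - {0}"
    have \<rho>: "finite ?\<rho>" "0 \<notin> ?\<rho>" "Suc (card ?\<rho>) = i"
      using \<sigma>(1,2) card_Suc_Diff1[OF \<sigma>(1) True] by auto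
    have "insert 0 ?\<rho> = \<sigma>"
      using True by blast
    then have "cone_lift n a \<omega> (sqfree (insert 0 ?\<rho>)) \<noteq> 0"
      using \<sigma>(3) by simp
    then obtain s where s: "s \<notin> ?\<rho>" "\<omega> (sqfree (insert s ?\<rho>)) \<noteq> 0"
      using iffD1[OF cone_lift_apex_nonzero_iff[OF \<omega> \<rho>]] by blast
    moreover have "card (insert s ?\<rho>) = i"
      using s(1) \<rho> by simp
    ultimately show ?thesis
      unfolding stress_supp_def using \<sigma>(1,4) by (intro CollectI exI[of _ "insert s ?\<rho>"]) auto
  qed
  moreover have "card \<tau> \<le> i"
    using card_mono[OF \<sigma>(1,4)] \<sigma>(2) by simp
  ultimately show "\<tau> \<in> skel (int i - 1) (cone0 (stress_supp i \<omega>))"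
    unfolding skel_def using in_cone0I by simp
qed

lemma stress_supp_subset_stress_supp_cone_lift:
  assumes \<omega>: "\<omega> \<in> lin_stresses \<Lambda> p' F' i"
  shows "stress_supp i \<omega> \<subseteq> stress_supp i (cone_lift n a \<omega>)"
proof
  fix \<tau> assume "\<tau> \<in> stress_supp i \<omega>"
  then obtain \<sigma> where \<sigma>: "finite \<sigma>" "card \<sigma> = i" "\<omega> (sqfree \<sigma>) \<noteq> 0" "\<tau> \<subseteq> \<sigma>"
    unfolding stress_supp_def by blast
  have "0 \<notin> \<sigma>"
    using face_subset[OF stress_sqfree_face[OF \<omega> \<sigma>(3)]] by auto
  then have "cone_lift n a \<omega> (sqfree \<sigma>) \<noteq> 0"
    using cone_lift_sqfree_nonzero_iff \<sigma>(3) by simp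
  then show "\<tau> \<in> stress_supp i (cone_lift n a \<omega>)"
    unfolding stress_supp_def using \<sigma> by blast
qed

lemma insert_0_in_stress_supp_cone_lift:
  assumes \<omega>: "\<omega> \<in> lin_stresses \<Lambda> p' F' i"
    and "\<tau> \<in> stress_supp i \<omega>" and "card (insert 0 \<tau>) \<le> i"
  shows "insert 0 \<tau> \<in> stress_supp i (cone_lift n a \<omega>)"
proof -
  obtain \<sigma> where \<sigma>: "finite \<sigma>" "card \<sigma> = i" "\<omega> (sqfree \<sigma>) \<noteq> 0" "\<tau> \<subseteq> \<sigma>"
    using \<open>\<tau> \<in> stress_supp i \<omega>\<close> unfolding stress_supp_def by blast
  have "0 \<notin> \<sigma>"
    using face_subset[OF stress_sqfree_face[OF \<omega> \<sigma>(3)]] by auto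
  then have "0 \<notin> \<tau>"
    using \<sigma>(4) by blast
  moreover have "finite \<tau>"
    using \<sigma>(1,4) finite_subset by blast
  ultimately have "card (insert 0 \<tau>) = Suc (card \<tau>)"
    by simp
  then have "\<tau> \<noteq> \<sigma>"
    using assms(3) \<sigma>(2) by auto
  then obtain s where s: "s \<in> \<sigma>" "s \<notin> \<tau>"
    using \<sigma>(4) by blast
  let ?\<rho> = "\<sigma> - {s}"
  have \<rho>: "finite ?\<rho>" "0 \<notin> ?\<rho>" "Suc (card ?\<rho>) = i"
    using \<sigma>(1,2) card_Suc_Diff1[OF \<sigma>(1) s(1)] \<open>0 \<notin> \<sigma>\<close> by auto
  have "insert s ?\<rho> = \<sigma>"
    using s(1) by blast
  then have "\<exists>s'. s' \<notin> ?\<rho> \<and> \<omega> (sqfree (insert s' ?\<rho>)) \<noteq> 0"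
    using \<sigma>(3) by (intro exI[of _ s]) simp
  then have "cone_lift n a \<omega> (sqfree (insert 0 ?\<rho>)) \<noteq> 0"
    using iffD2[OF cone_lift_apex_nonzero_iff[OF \<omega> \<rho>]] by blast
  moreover have "finite (insert 0 ?\<rho>)" "card (insert 0 ?\<rho>) = i" "insert 0 \<tau> \<subseteq> insert 0 ?\<rho>"
    using \<rho> \<sigma>(4) s(2) by auto
  ultimately show ?thesis
    unfolding stress_supp_def by blast
qed

lemma stress_supp_cone_lift:
  assumes \<omega>: "\<omega> \<in> lin_stresses \<Lambda> p' F' i"
  shows "stress_supp i (cone_lift n a \<omega>) = skel (int i - 1) (cone0 (stress_supp i \<omega>))"
proof
  show "skel (int i - 1) (cone0 (stress_supp i \<omega>)) \<subseteq> stress_supp i (cone_lift n a \<omega>)"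
  proof
    fix \<tau> assume "\<tau> \<in> skel (int i - 1) (cone0 (stress_supp i \<omega>))"
    then have "\<tau> \<in> cone0 (stress_supp i \<omega>)" and "card \<tau> \<le> i"
      unfolding skel_def by auto
    then obtain \<tau>\<^sub>0 where \<tau>\<^sub>0: "\<tau>\<^sub>0 \<in> stress_supp i \<omega>" and cases: "\<tau> = \<tau>\<^sub>0 \<or> \<tau> = insert 0 \<tau>\<^sub>0"
      unfolding cone0_def by blast
    from cases show "\<tau> \<in> stress_supp i (cone_lift n a \<omega>)"
    proof
      assume "\<tau> = \<tau>\<^sub>0"
      then show ?thesis
        using stress_supp_subset_stress_supp_cone_lift[OF \<omega>] \<tau>\<^sub>0 by blast
    next
      assume "\<tau> = insert 0 \<tau>\<^sub>0"
      then show ?thesis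
        using insert_0_in_stress_supp_cone_lift[OF \<omega> \<tau>\<^sub>0] \<open>card \<tau> \<le> i\<close> by simp
    qed
  qed
qed (rule stress_supp_cone_lift_subset[OF \<omega>])

end

theorem lemma3p1:
  fixes d n :: nat and \<Lambda> :: "nat set set" and p' :: "nat \<Rightarrow> nat \<Rightarrow> real"
    and a :: "nat \<Rightarrow> real" and F F' :: "real set" and p :: "nat \<Rightarrow> nat \<Rightarrow> real"
  assumes "d \<ge> 1"
    and "simplicial_complex {1..n} \<Lambda>"
    and "cdim1 \<Lambda> = d - 1"
    and "alg_indep \<rat> ({1..n} \<times> {1..d-1}) (\<lambda>(s, t). p' s t)"
    and "F' = field_gen (\<rat> \<union> {p' s t | s t. s \<in> {1..n} \<and> t \<in> {1..d-1}})"
    and "alg_indep F' {1..n} a"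
    and "is_subfield F" and "field_gen (F' \<union> a ` {1..n}) \<subseteq> F"
    and "p = (\<lambda>s t. if s = 0 then (if t = d then -1 else 0)
                    else if t = d then a s else (1 + a s) * p' s t)"
  shows "\<exists>\<psi> :: nat \<Rightarrow> poly_r \<Rightarrow> poly_r.
    \<forall>i \<le> d - 1.
      (\<forall>\<omega> \<in> lin_stresses \<Lambda> p' F' i. \<psi> i \<omega> \<in> lin_stresses (cone0 \<Lambda>) p F i) \<and>
      (\<forall>\<omega>1 \<in> lin_stresses \<Lambda> p' F' i. \<forall>\<omega>2 \<in> lin_stresses \<Lambda> p' F' i.
          \<psi> i (\<lambda>m. \<omega>1 m + \<omega>2 m) = (\<lambda>m. \<psi> i \<omega>1 m + \<psi> i \<omega>2 m)) \<and>
      (\<forall>c \<in> F'. \<forall>\<omega> \<in> lin_stresses \<Lambda> p' F' i.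
          \<psi> i (\<lambda>m. c * \<omega> m) = (\<lambda>m. c * \<psi> i \<omega> m)) \<and>
      (\<forall>\<omega> \<in> lin_stresses \<Lambda> p' F' i.
          stress_supp i (\<psi> i \<omega>) = skel (int i - 1) (cone0 (stress_supp i \<omega>))) \<and>
      (i \<ge> 1 \<longrightarrow> (\<forall>\<omega> \<in> lin_stresses \<Lambda> p' F' i.
          \<psi> (i - 1) (pderiv_lin {1..n} (\<lambda>_. 1) \<omega>) =
          pderiv_lin {0..n} (\<lambda>_. 1) (\<psi> i \<omega>)))"
proof -
  have "\<sigma> \<subseteq> {1..n} \<and> card \<sigma> \<le> d - 1" if "\<sigma> \<in> \<Lambda>" for \<sigma>
    using simplicial_complex_face_subset[OF assms(2) that] card_le_cdim1[OF assms(2) that] assms(3)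
    by simp
  then have "lin_indep_on_faces \<Lambda> (d - 1) p'"
    by (rule alg_indep_imp_lin_indep_on_faces[OF assms(4) finite_atLeastAtMost])
  moreover have "is_subfield F'"
    using assms(5) is_subfield_field_gen by simp
  moreover have "F' \<union> a ` {1..n} \<subseteq> F"
    using field_gen_superset assms(8) by (rule subset_trans)
  ultimately have framework: "cone_framework d n \<Lambda> p' a F F' p"
    using assms by unfold_locales auto
  show ?thesis
    using cone_framework.cone_lift_stress[OF framework] cone_framework.stress_supp_cone_lift[OF framework]
      cone_framework.pderiv_lin_ones_cone_lift[OF framework]
    by (intro exI[of _ "\<lambda>_. cone_lift n a"]) (simp add: cone_lift_add cone_lift_smult)
qed

end
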